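(* Let $C$ be a cycle of goods and $N$ a set of agents of at most two types. Then there exists a $\frac34$-sufficient allocation of the goods of $C$ to the agents in $N$.
   Context: A cycle of goods has goods $v_1,\dots,v_m$ with edges $v_iv_{i+1}$ and $v_mv_1$. A utility function assigns a non-negative real to each good, extended additively to sets. A bundle is a set of goods inducing a connected subgraph (empty allowed); an $n$-split is a sequence of $n$ pairwise disjoint bundles (possibly empty) with union all goods. $\mathrm{mms}^{(n)}(C,u)=\max_{P_1,\dots,P_n}\min_i u(P_i)$ over all $n$-splits. Agents are of the same type if they have the same utility function. An allocation to agents $1,\dots,n$ with utilities $u_1,\dots,u_n$ is an $n$-split $P_1,\dots,P_n$ with $P_i$ given to agent $i$; for $c>0$ it is $c$-sufficient if $u_i(P_i)\ge c\cdot\mathrm{mms}^{(n)}(C,u_i)$ for all $i$. *)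

theory Defs
  imports Complex_Main
begin

definition cycle_adj :: "nat \<Rightarrow> nat \<Rightarrow> nat \<Rightarrow> bool" where
  "cycle_adj m i j \<longleftrightarrow> i < m \<and> j < m \<and> (j = Suc i mod m \<or> i = Suc j mod m)"

definition is_bundle :: "nat \<Rightarrow> nat set \<Rightarrow> bool" where
  "is_bundle m S \<longleftrightarrow> S \<subseteq> {0..<m} \<and>
     (\<forall>x\<in>S. \<forall>y\<in>S. (x, y) \<in> rtrancl {(a, b). a \<in> S \<and> b \<in> S \<and> cycle_adj m a b})"

definition is_split :: "nat \<Rightarrow> nat \<Rightarrow> (nat \<Rightarrow> nat set) \<Rightarrow> bool" where
  "is_split m n P \<longleftrightarrow> (\<forall>i<n. is_bundle m (P i)) \<and>
     (\<forall>i<n. \<forall>j<n. i \<noteq> j \<longrightarrow> P i \<inter> P j = {}) \<and>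
     (\<Union>i<n. P i) = {0..<m}"

definition util :: "(nat \<Rightarrow> real) \<Rightarrow> nat set \<Rightarrow> real" where
  "util u S = (\<Sum>g\<in>S. u g)"

definition mms :: "nat \<Rightarrow> nat \<Rightarrow> (nat \<Rightarrow> real) \<Rightarrow> real" where
  "mms m n u = (SUP P \<in> {P. is_split m n P}. (MIN i \<in> {0..<n}. util u (P i)))"

definition sufficient :: "real \<Rightarrow> nat \<Rightarrow> nat \<Rightarrow> (nat \<Rightarrow> nat \<Rightarrow> real) \<Rightarrow> (nat \<Rightarrow> nat set) \<Rightarrow> bool" where
  "sufficient c m n U P \<longleftrightarrow> is_split m n P \<and> (\<forall>i<n. util (U i) (P i) \<ge> c * mms m n (U i))"

end

theory Submission
  imports Defs "HOL-Library.FuncSet"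
begin

text \<open>Unroll the cycle onto the naturals, position x holding good x mod m. An MMS split for either
  type then becomes a periodic sequence of cuts, p for the first type and q for the second, each
  piece worth at least the type's MMS value. If a piece of one cutting lies inside a piece of the
  other, give it to an agent of its type: on the remaining path both types can still cut n - 1
  good pieces, and on a path a greedy sweep serves any mixture of the two types. Otherwise the
  cuttings interleave, and every piece splits at a cut of the other type into a head and a tail.
  If some head or tail is worth 3/4 of the share of some type, starting there gives both types a
  cutting of the whole cycle into n pieces worth 3/4 of their share. If all heads and tails are
  small, then of any two consecutive pieces of one cutting at least one is worth 3/4 of the share
  of the other type, so the minority type can be served out of the majority type's cutting.\<close>

definition seg_sum :: "(nat \<Rightarrow> real) \<Rightarrow> nat \<Rightarrow> nat \<Rightarrow> real" where
  "seg_sum w x y = (\<Sum>i\<in>{x..<y}. w i)"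

lemma seg_sum_split: "x \<le> y \<Longrightarrow> y \<le> z \<Longrightarrow> seg_sum w x z = seg_sum w x y + seg_sum w y z"
  unfolding seg_sum_def by (simp add: sum.atLeastLessThan_concat)

lemma seg_sum_nonneg: "(\<And>x. 0 \<le> w x) \<Longrightarrow> 0 \<le> seg_sum w x y"
  unfolding seg_sum_def by (simp add: sum_nonneg)

lemma seg_sum_mono:
  assumes "\<And>x. 0 \<le> w x" "x' \<le> x" "x \<le> y" "y \<le> y'"
  shows "seg_sum w x y \<le> seg_sum w x' y'"
proof -
  have "seg_sum w x' y' = seg_sum w x' x + seg_sum w x y + seg_sum w y y'"
    using assms seg_sum_split[of x' x y' w] seg_sum_split[of x y y' w] by simp
  moreover have "0 \<le> seg_sum w x' x" "0 \<le> seg_sum w y y'"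
    using assms(1) seg_sum_nonneg by auto
  ultimately show ?thesis by linarith
qed

lemma seg_sum_periodic:
  assumes "\<And>x. w (x + m) = w x"
  shows "seg_sum w (x + t * m) (y + t * m) = seg_sum w x y"
proof -
  have "w (i + t * m) = w i" for i
  proof (induction t)
    case (Suc t)
    have "i + Suc t * m = (i + t * m) + m" by simp
    then show ?case using Suc assms by metis
  qed simp
  then show ?thesis
    unfolding seg_sum_def sum.shift_bounds_nat_ivl by simp
qed

definition cuttable :: "(nat \<Rightarrow> real) \<Rightarrow> real \<Rightarrow> nat \<Rightarrow> nat \<Rightarrow> nat \<Rightarrow> bool" where
  "cuttable w t s e n \<longleftrightarrow>
     (\<exists>c. c 0 = s \<and> c n = e \<and> (\<forall>i<n. c i \<le> c (Suc i) \<and> t \<le> seg_sum w (c i) (c (Suc i))))"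

lemma cuttable_single: "s \<le> e \<Longrightarrow> t \<le> seg_sum w s e \<Longrightarrow> cuttable w t s e 1"
  unfolding cuttable_def by (rule exI[of _ "\<lambda>i. if i = 0 then s else e"]) simp

lemma cuttable_append:
  assumes "cuttable w t s x n1" "cuttable w t x e n2"
  shows "cuttable w t s e (n1 + n2)"
proof -
  obtain c1 where c1: "c1 0 = s" "c1 n1 = x"
    "\<forall>i<n1. c1 i \<le> c1 (Suc i) \<and> t \<le> seg_sum w (c1 i) (c1 (Suc i))"
    using assms(1) unfolding cuttable_def by blast
  obtain c2 where c2: "c2 0 = x" "c2 n2 = e"
    "\<forall>i<n2. c2 i \<le> c2 (Suc i) \<and> t \<le> seg_sum w (c2 i) (c2 (Suc i))"
    using assms(2) unfolding cuttable_def by blast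
  define c where "c i = (if i \<le> n1 then c1 i else c2 (i - n1))" for i
  have "c i \<le> c (Suc i) \<and> t \<le> seg_sum w (c i) (c (Suc i))" if i: "i < n1 + n2" for i
  proof (cases "i < n1")
    case True
    then show ?thesis using c1 by (simp add: c_def)
  next
    case False
    then have "c i = c2 (i - n1)" "c (Suc i) = c2 (Suc (i - n1))"
      using c1(2) c2(1) by (auto simp: c_def Suc_diff_le)
    then show ?thesis using c2(3) i False by simp
  qed
  moreover have "c 0 = s" "c (n1 + n2) = e" using c1 c2 by (auto simp: c_def)
  ultimately show ?thesis unfolding cuttable_def by blast
qed

lemma cuttable_widen:
  assumes "cuttable w t s e n" "1 \<le> n" "\<And>x. 0 \<le> w x" "s' \<le> s" "e \<le> e'"
  shows "cuttable w t s' e' n"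
proof -
  obtain c where c: "c 0 = s" "c n = e"
    "\<forall>i<n. c i \<le> c (Suc i) \<and> t \<le> seg_sum w (c i) (c (Suc i))"
    using assms(1) unfolding cuttable_def by blast
  define c' where "c' i = (if i = 0 then s' else if i = n then e' else c i)" for i
  have "c' i \<le> c' (Suc i) \<and> t \<le> seg_sum w (c' i) (c' (Suc i))" if i: "i < n" for i
  proof -
    have "c' i \<le> c i" "c (Suc i) \<le> c' (Suc i)" using assms(4,5) c(1,2) i by (auto simp: c'_def)
    then show ?thesis using c(3) i seg_sum_mono[OF assms(3)] by (meson order_trans)
  qed
  moreover have "c' 0 = s'" "c' n = e'" using assms(2) by (auto simp: c'_def)
  ultimately show ?thesis unfolding cuttable_def by blast
qed

lemma cuttable_SucE:
  assumes "cuttable w t s e (Suc n)"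
  obtains x where "s \<le> x" "t \<le> seg_sum w s x" "cuttable w t x e n"
proof -
  obtain c where c: "c 0 = s" "c (Suc n) = e"
    "\<forall>i<Suc n. c i \<le> c (Suc i) \<and> t \<le> seg_sum w (c i) (c (Suc i))"
    using assms unfolding cuttable_def by blast
  have "cuttable w t (c 1) e n"
    unfolding cuttable_def using c by (intro exI[of _ "\<lambda>i. c (Suc i)"]) auto
  moreover have "s \<le> c 1" "t \<le> seg_sum w s (c 1)" using c by auto
  ultimately show ?thesis using that by blast
qed

definition mixed_cuttable ::
    "(nat \<Rightarrow> real) \<Rightarrow> (nat \<Rightarrow> real) \<Rightarrow> real \<Rightarrow> real \<Rightarrow> nat \<Rightarrow> nat \<Rightarrow> nat \<Rightarrow> nat \<Rightarrow> bool" where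
  "mixed_cuttable wu wv tu tv s e k l \<longleftrightarrow>
     (\<exists>c \<tau>. c 0 = s \<and> c (k + l) = e \<and> card {i. i < k + l \<and> \<tau> i} = k \<and>
       (\<forall>i<k + l. c i \<le> c (Suc i) \<and>
          (if \<tau> i then tu \<le> seg_sum wu (c i) (c (Suc i)) else tv \<le> seg_sum wv (c i) (c (Suc i)))))"

lemma mixed_cuttable_select:
  assumes "k + l = n" "\<forall>j<n. c j \<le> c (Suc j)" "c 0 = s" "c n = e" "S \<subseteq> {..<n}" "card S = k"
    "\<forall>j\<in>S. tu \<le> seg_sum wu (c j) (c (Suc j))"
    "\<forall>j<n. j \<notin> S \<longrightarrow> tv \<le> seg_sum wv (c j) (c (Suc j))"
  shows "mixed_cuttable wu wv tu tv s e k l"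
proof -
  have "{i. i < k + l \<and> i \<in> S} = S" using assms(1,5) by auto
  then show ?thesis unfolding mixed_cuttable_def using assms
    by (intro exI[of _ c] exI[of _ "\<lambda>j. j \<in> S"]) auto
qed

lemma mixed_cuttable_if_cuttable_left:
  assumes "cuttable wu tu s e k"
  shows "mixed_cuttable wu wv tu tv s e k 0"
proof -
  obtain c where "c 0 = s" "c k = e" "\<forall>i<k. c i \<le> c (Suc i) \<and> tu \<le> seg_sum wu (c i) (c (Suc i))"
    using assms unfolding cuttable_def by blast
  then show ?thesis unfolding mixed_cuttable_def by (intro exI[of _ c] exI[of _ "\<lambda>_. True"]) simp
qed

lemma mixed_cuttable_if_cuttable_right:
  assumes "cuttable wv tv s e l"
  shows "mixed_cuttable wu wv tu tv s e 0 l"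
proof -
  obtain c where "c 0 = s" "c l = e" "\<forall>i<l. c i \<le> c (Suc i) \<and> tv \<le> seg_sum wv (c i) (c (Suc i))"
    using assms unfolding cuttable_def by blast
  then show ?thesis unfolding mixed_cuttable_def by (intro exI[of _ c] exI[of _ "\<lambda>_. False"]) simp
qed

lemma mixed_cuttable_Cons:
  assumes "s \<le> x" "mixed_cuttable wu wv tu tv x e k l"
    and "b \<Longrightarrow> tu \<le> seg_sum wu s x" "\<not> b \<Longrightarrow> tv \<le> seg_sum wv s x"
  shows "mixed_cuttable wu wv tu tv s e (if b then Suc k else k) (if b then l else Suc l)"
proof -
  obtain c \<tau> where c: "c 0 = x" "c (k + l) = e" "card {i. i < k + l \<and> \<tau> i} = k"
    "\<forall>i<k + l. c i \<le> c (Suc i) \<and>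
       (if \<tau> i then tu \<le> seg_sum wu (c i) (c (Suc i)) else tv \<le> seg_sum wv (c i) (c (Suc i)))"
    using assms(2) unfolding mixed_cuttable_def by blast
  define c' where "c' i = (if i = 0 then s else c (i - 1))" for i
  define \<tau>' where "\<tau>' i = (if i = 0 then b else \<tau> (i - 1))" for i
  have "{i. i < Suc (k + l) \<and> \<tau>' i} =
      (if b then insert 0 (Suc ` {i. i < k + l \<and> \<tau> i}) else Suc ` {i. i < k + l \<and> \<tau> i})"
    by (rule set_eqI) (auto simp: \<tau>'_def gr0_conv_Suc)
  then have "card {i. i < Suc (k + l) \<and> \<tau>' i} = (if b then Suc k else k)"
    using c(3) by (simp add: card_image)
  moreover have "\<forall>i<Suc (k + l). c' i \<le> c' (Suc i) \<and>
       (if \<tau>' i then tu \<le> seg_sum wu (c' i) (c' (Suc i)) else tv \<le> seg_sum wv (c' i) (c' (Suc i)))"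
    using assms(1,3,4) c(1,4) by (auto simp: c'_def \<tau>'_def less_Suc_eq_0_disj)
  moreover have "c' 0 = s" "c' (Suc (k + l)) = e" using c by (auto simp: c'_def)
  ultimately show ?thesis
    unfolding mixed_cuttable_def by (intro exI[of _ c'] exI[of _ \<tau>']) auto
qed

lemma mixed_cuttable_swap:
  assumes "mixed_cuttable wv wu tv tu s e l k"
  shows "mixed_cuttable wu wv tu tv s e k l"
proof -
  obtain c \<tau> where c: "c 0 = s" "c (l + k) = e" "card {i. i < l + k \<and> \<tau> i} = l"
    "\<forall>i<l + k. c i \<le> c (Suc i) \<and>
       (if \<tau> i then tv \<le> seg_sum wv (c i) (c (Suc i)) else tu \<le> seg_sum wu (c i) (c (Suc i)))"
    using assms unfolding mixed_cuttable_def by blast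
  have "{i. i < k + l \<and> \<not> \<tau> i} = {..<k + l} - {i. i < l + k \<and> \<tau> i}" by auto
  then have "card {i. i < k + l \<and> \<not> \<tau> i} = k"
    using c(3) by (simp add: card_Diff_subset subset_eq)
  then show ?thesis
    unfolding mixed_cuttable_def using c by (intro exI[of _ c] exI[of _ "\<lambda>i. \<not> \<tau> i"]) (auto simp: add.commute)
qed

text \<open>Greedy: serve the type whose first piece ends first. On the rest, both types still have
  n - 1 good pieces, the other type dropping its first piece and stretching its second back.\<close>

lemma mixed_cuttable_if_cuttable_both:
  assumes "k + l = n" "cuttable wu tu s e n" "cuttable wv tv s e n"
    and "\<And>x. 0 \<le> wu x" "\<And>x. 0 \<le> wv x"
  shows "mixed_cuttable wu wv tu tv s e k l"
  using assms(1-3)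
proof (induction n arbitrary: s k l)
  case 0
  then show ?case using mixed_cuttable_if_cuttable_left by auto
next
  case (Suc n)
  consider "k = 0" | "l = 0" | "1 \<le> k" "1 \<le> l" "1 \<le> n" using Suc.prems(1) by linarith
  then show ?case
  proof cases
    case 1
    then show ?thesis using Suc.prems mixed_cuttable_if_cuttable_right by auto
  next
    case 2
    then show ?thesis using Suc.prems mixed_cuttable_if_cuttable_left by auto
  next
    case 3
    obtain x where x: "s \<le> x" "tu \<le> seg_sum wu s x" "cuttable wu tu x e n"
      using cuttable_SucE[OF Suc.prems(2)] .
    obtain y where y: "s \<le> y" "tv \<le> seg_sum wv s y" "cuttable wv tv y e n"
      using cuttable_SucE[OF Suc.prems(3)] .
    show ?thesis
    proof (cases "x \<le> y")
      case True
      have "cuttable wv tv x e n" using cuttable_widen[OF y(3) 3(3) assms(5) True] by simp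
      then have "mixed_cuttable wu wv tu tv x e (k - 1) l"
        using Suc.IH[of "k - 1" l x] x(3) Suc.prems(1) 3 by simp
      from mixed_cuttable_Cons[OF x(1) this, of True] x(2) 3 show ?thesis by simp
    next
      case False
      have "cuttable wu tu y e n" using cuttable_widen[OF x(3) 3(3) assms(4)] False by simp
      then have "mixed_cuttable wu wv tu tv y e k (l - 1)"
        using Suc.IH[of k "l - 1" y] y(3) Suc.prems(1) 3 by simp
      from mixed_cuttable_Cons[OF y(1) this, of False] y(2) 3 show ?thesis by simp
    qed
  qed
qed

lemma card_ge_half_if_succ_mod_mem:
  assumes "G \<subseteq> {..<n}" "\<And>j. j < n \<Longrightarrow> j \<notin> G \<Longrightarrow> Suc j mod n \<in> G"
  shows "n \<le> 2 * card G"
proof -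
  let ?f = "\<lambda>j. Suc j mod n"
  have "inj_on ?f ({..<n} - G)"
  proof (rule inj_onI)
    fix x y assume "x \<in> {..<n} - G" "y \<in> {..<n} - G" "Suc x mod n = Suc y mod n"
    then show "x = y"
      by (cases "Suc x = n"; cases "Suc y = n") (auto simp: mod_if split: if_splits)
  qed
  moreover have "?f ` ({..<n} - G) \<subseteq> G" using assms(2) by auto
  ultimately have "card ({..<n} - G) \<le> card G"
    using card_inj_on_le finite_subset[OF assms(1)] by blast
  moreover have "card ({..<n} - G) = n - card G"
    using assms(1) by (simp add: card_Diff_subset finite_subset)
  ultimately show ?thesis by linarith
qed

text \<open>The cutting of the cycle unrolled onto the naturals: p i is the i-th cut point, and the
  piece [p i, p (Suc i)) stands for the goods x mod m with x in it.\<close>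

locale periodic_cuts =
  fixes m n :: nat and w :: "nat \<Rightarrow> real" and a :: real and p :: "nat \<Rightarrow> nat"
  assumes weight_nonneg: "\<And>x. 0 \<le> w x"
    and weight_periodic: "\<And>x. w (x + m) = w x"
    and cut_mono: "\<And>i. p i \<le> p (Suc i)"
    and cut_periodic: "\<And>i. p (i + n) = p i + m"
    and piece_value: "\<And>i. a \<le> seg_sum w (p i) (p (Suc i))"
    and value_nonneg: "0 \<le> a"
begin

lemma shift: "periodic_cuts m n w a (\<lambda>i. p (i + d))"
proof
  show "p (i + n + d) = p (i + d) + m" for i
    using cut_periodic[of "i + d"] by (simp add: ac_simps)
qed (simp_all add: weight_nonneg weight_periodic cut_mono piece_value value_nonneg)

lemma cut_periodic_mult: "p (i + t * n) = p i + t * m"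
proof (induction t)
  case (Suc t)
  have "p (i + Suc t * n) = p ((i + t * n) + n)" by (simp add: ac_simps)
  then show ?case using Suc cut_periodic by simp
qed simp

lemma cut_straddles:
  assumes "0 < m" "p 0 \<le> x"
  obtains d where "p d \<le> x" "x < p (Suc d)"
proof -
  have "x < p (0 + Suc x * n)"
    using cut_periodic_mult[of 0 "Suc x"] mult_le_mono2[of 1 m "Suc x"] assms(1) by simp
  then have ex: "\<exists>j. x < p j" by blast
  define j where "j = (LEAST j. x < p j)"
  have j: "x < p j" unfolding j_def using LeastI_ex[OF ex] .
  then have "j \<noteq> 0" using assms(2) by (metis leD)
  moreover have "p (j - 1) \<le> x"
    using not_less_Least[of "j - 1" "\<lambda>j. x < p j"] calculation unfolding j_def by linarith
  ultimately show ?thesis using that j by (metis Suc_pred' gr0I)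
qed

lemma cuttable_along: "t \<le> a \<Longrightarrow> cuttable w t (p i) (p (i + j)) j"
  unfolding cuttable_def using cut_mono piece_value
  by (intro exI[of _ "\<lambda>r. p (i + r)"]) (auto intro: order_trans)

lemma cuttable_round: "t \<le> a \<Longrightarrow> cuttable w t (p i) (p i + m) n"
  using cuttable_along[of t i n] cut_periodic by simp

lemma cuttable_round_but_one: "t \<le> a \<Longrightarrow> 1 \<le> n \<Longrightarrow> cuttable w t (p (Suc i)) (p i + m) (n - 1)"
  using cuttable_along[of t "Suc i" "n - 1"] cut_periodic[of i] by simp

lemma mixed_cuttable_if_alternating:
  assumes "k + l = n" "2 * k \<le> n" "tv \<le> a" "\<And>x. wu (x + m) = wu x"
    and alternating:
      "\<And>i. tu \<le> seg_sum wu (p i) (p (Suc i)) \<or> tu \<le> seg_sum wu (p (Suc i)) (p (Suc (Suc i)))"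
  shows "mixed_cuttable wu w tu tv (p 0) (p 0 + m) k l"
proof -
  define G where "G = {j. j < n \<and> tu \<le> seg_sum wu (p j) (p (Suc j))}"
  have "Suc j mod n \<in> G" if j: "j < n" "j \<notin> G" for j
  proof -
    have next_good: "tu \<le> seg_sum wu (p (Suc j)) (p (Suc (Suc j)))"
      using alternating[of j] j unfolding G_def by auto
    show ?thesis
    proof (cases "Suc j = n")
      case True
      have "seg_sum wu (p (0 + n)) (p (1 + n)) = seg_sum wu (p 0) (p 1)"
        unfolding cut_periodic using seg_sum_periodic[of wu m _ 1] assms(4) by simp
      then show ?thesis using next_good True j by (simp add: G_def)
    next
      case False
      then show ?thesis using next_good j by (simp add: G_def)
    qed
  qed
  then have "n \<le> 2 * card G"
    by (intro card_ge_half_if_succ_mod_mem) (auto simp: G_def)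
  then have "k \<le> card G" using assms(2) by linarith
  then obtain S where S: "S \<subseteq> G" "card S = k" using obtain_subset_with_card_n by metis
  show ?thesis
  proof (rule mixed_cuttable_select[OF assms(1), of p _ _ S])
    show "p n = p 0 + m" using cut_periodic[of 0] by simp
    show "\<forall>j<n. j \<notin> S \<longrightarrow> tv \<le> seg_sum w (p j) (p (Suc j))"
      using piece_value assms(3) by (meson order_trans)
  qed (use S cut_mono in \<open>auto simp: G_def\<close>)
qed

end

text \<open>This is where the factor 3/4 is tight: if both sums were below 3/4 * a, then y i and
  x (Suc (Suc i)) would each exceed a / 4, while x (Suc i) + y (Suc i) \<ge> a.\<close>

lemma one_of_two_sums_large:
  fixes x y :: "nat \<Rightarrow> real"
  assumes "\<And>j. a \<le> x j + y j" "\<And>j. x j < 3/4 * a" "\<And>j. y j < 3/4 * a"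
  shows "3/4 * a \<le> y i + x (Suc i) \<or> 3/4 * a \<le> y (Suc i) + x (Suc (Suc i))"
  using assms[of i] assms[of "Suc i"] assms[of "Suc (Suc i)"] by linarith

locale cut_pair =
  u: periodic_cuts m n wu a p + v: periodic_cuts m n wv b q
  for m n :: nat and wu :: "nat \<Rightarrow> real" and a :: real and p :: "nat \<Rightarrow> nat"
    and wv :: "nat \<Rightarrow> real" and b :: real and q :: "nat \<Rightarrow> nat" +
  fixes k l :: nat
  assumes agents: "k + l = n" and k_pos: "1 \<le> k" and l_pos: "1 \<le> l"
begin

abbreviation fair_cut_exists :: bool where
  "fair_cut_exists \<equiv> \<exists>s. mixed_cuttable wu wv (3/4 * a) (3/4 * b) s (s + m) k l"

text \<open>When the cuttings interleave, the head of piece i of p is [p i, q (Suc i)) and its tail is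
  [q (Suc i), p (Suc i)).\<close>

abbreviation interleaved :: bool where
  "interleaved \<equiv> \<forall>i. q i \<le> p i \<and> p i < q (Suc i) \<and> q (Suc i) < p (Suc i)"

lemma two_le_n: "2 \<le> n"
  using agents k_pos l_pos by simp

lemma u_cuttable_round: "cuttable wu (3/4 * a) (p i) (p i + m) n"
  using u.cuttable_round u.value_nonneg by simp

lemma v_cuttable_round: "cuttable wv (3/4 * b) (q i) (q i + m) n"
  using v.cuttable_round v.value_nonneg by simp

lemma u_cuttable_round_but_one: "cuttable wu (3/4 * a) (p (Suc i)) (p i + m) (n - 1)"
  using u.cuttable_round_but_one u.value_nonneg two_le_n by simp

lemma v_cuttable_round_but_one: "cuttable wv (3/4 * b) (q (Suc i)) (q i + m) (n - 1)"
  using v.cuttable_round_but_one v.value_nonneg two_le_n by simp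

lemma fair_cut_if_cuttable_both:
  assumes "cuttable wu (3/4 * a) s (s + m) n" "cuttable wv (3/4 * b) s (s + m) n"
  shows fair_cut_exists
  using mixed_cuttable_if_cuttable_both[OF agents assms u.weight_nonneg v.weight_nonneg] by blast

lemma fair_cut_if_u_piece_nested:
  assumes "q i \<le> p i" "p (Suc i) \<le> q (Suc i)"
  shows fair_cut_exists
proof -
  have v: "cuttable wv (3/4 * b) (p (Suc i)) (p i + m) (n - 1)"
    using cuttable_widen[OF v_cuttable_round_but_one[of i] _ v.weight_nonneg assms(2)] two_le_n assms(1) by simp
  have "mixed_cuttable wu wv (3/4 * a) (3/4 * b) (p (Suc i)) (p i + m) (k - 1) l"
    using mixed_cuttable_if_cuttable_both[OF _ u_cuttable_round_but_one v u.weight_nonneg v.weight_nonneg]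
      agents k_pos by simp
  moreover have "3/4 * a \<le> seg_sum wu (p i) (p (Suc i))"
    using u.piece_value[of i] u.value_nonneg by linarith
  ultimately have "mixed_cuttable wu wv (3/4 * a) (3/4 * b) (p i) (p i + m) (Suc (k - 1)) l"
    using mixed_cuttable_Cons[OF u.cut_mono, where b=True] by simp
  then show ?thesis using k_pos by auto
qed

lemma fair_cut_if_v_piece_nested:
  assumes "p i \<le> q (Suc i)" "q (Suc (Suc i)) \<le> p (Suc i)"
  shows fair_cut_exists
proof -
  have u: "cuttable wu (3/4 * a) (q (Suc (Suc i))) (q (Suc i) + m) (n - 1)"
    using cuttable_widen[OF u_cuttable_round_but_one[of i] _ u.weight_nonneg assms(2)] two_le_n assms(1) by simp
  have "mixed_cuttable wu wv (3/4 * a) (3/4 * b) (q (Suc (Suc i))) (q (Suc i) + m) k (l - 1)"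
    using mixed_cuttable_if_cuttable_both[OF _ u v_cuttable_round_but_one u.weight_nonneg v.weight_nonneg]
      agents l_pos by simp
  moreover have "3/4 * b \<le> seg_sum wv (q (Suc i)) (q (Suc (Suc i)))"
    using v.piece_value[of "Suc i"] v.value_nonneg by linarith
  ultimately have "mixed_cuttable wu wv (3/4 * a) (3/4 * b) (q (Suc i)) (q (Suc i) + m) k (Suc (l - 1))"
    using mixed_cuttable_Cons[OF v.cut_mono, where b=False] by simp
  then show ?thesis using l_pos by auto
qed

lemma interleaved_if_not_nested:
  assumes "q 0 \<le> p 0" "p 0 < q 1"
    and not_u_nested: "\<And>i. \<not> (q i \<le> p i \<and> p (Suc i) \<le> q (Suc i))"
    and not_v_nested: "\<And>i. \<not> (p i \<le> q (Suc i) \<and> q (Suc (Suc i)) \<le> p (Suc i))"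
  shows interleaved
proof -
  have "q i \<le> p i \<and> p i < q (Suc i)" for i
  proof (induction i)
    case (Suc i)
    then have "q (Suc i) < p (Suc i)" using not_u_nested by force
    moreover have "p (Suc i) < q (Suc (Suc i))" using Suc not_v_nested[of i] by force
    ultimately show ?case by simp
  qed (use assms in simp)
  then show ?thesis using not_u_nested by (metis not_le)
qed

lemma fair_cut_if_head_worth_v:
  assumes interleaved "3/4 * b \<le> seg_sum wv (p i) (q (Suc i))"
  shows fair_cut_exists
proof -
  have v1: "cuttable wv (3/4 * b) (p i) (q (Suc i)) 1"
    using cuttable_single assms by (meson less_imp_le)
  have v2: "cuttable wv (3/4 * b) (q (Suc i)) (p i + m) (n - 1)"
    using cuttable_widen[OF v_cuttable_round_but_one[of i] _ v.weight_nonneg, of "q (Suc i)" "p i + m"]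
      assms(1) two_le_n by simp
  have "cuttable wv (3/4 * b) (p i) (p i + m) n"
    using cuttable_append[OF v1 v2] two_le_n by simp
  moreover have "cuttable wu (3/4 * a) (p i) (p i + m) n"
    using u_cuttable_round by simp
  ultimately show ?thesis using fair_cut_if_cuttable_both by blast
qed

lemma fair_cut_if_tail_worth_v:
  assumes interleaved "3/4 * b \<le> seg_sum wv (q (Suc i)) (p (Suc i))"
  shows fair_cut_exists
proof -
  have v1: "cuttable wv (3/4 * b) (p (Suc i)) (q (Suc i) + m) (n - 1)"
    using cuttable_widen[OF v_cuttable_round_but_one[of "Suc i"] _ v.weight_nonneg, of "p (Suc i)" "q (Suc i) + m"]
      assms(1) two_le_n
    by (simp add: less_imp_le)
  have "seg_sum wv (q (Suc i) + 1 * m) (p (Suc i) + 1 * m) = seg_sum wv (q (Suc i)) (p (Suc i))"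
    using seg_sum_periodic[of wv m, OF v.weight_periodic] .
  then have v2: "cuttable wv (3/4 * b) (q (Suc i) + m) (p (Suc i) + m) 1"
    using cuttable_single assms by (simp add: less_imp_le)
  have "cuttable wv (3/4 * b) (p (Suc i)) (p (Suc i) + m) n"
    using cuttable_append[OF v1 v2] two_le_n by simp
  moreover have "cuttable wu (3/4 * a) (p (Suc i)) (p (Suc i) + m) n"
    using u_cuttable_round by simp
  ultimately show ?thesis using fair_cut_if_cuttable_both by blast
qed

lemma fair_cut_if_head_worth_u:
  assumes interleaved "3/4 * a \<le> seg_sum wu (p i) (q (Suc i))"
  shows fair_cut_exists
proof -
  have u1: "cuttable wu (3/4 * a) (q (Suc i)) (p i + m) (n - 1)"
    using cuttable_widen[OF u_cuttable_round_but_one[of i] _ u.weight_nonneg, of "q (Suc i)" "p i + m"]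
      assms(1) two_le_n
    by (simp add: less_imp_le)
  have "seg_sum wu (p i + 1 * m) (q (Suc i) + 1 * m) = seg_sum wu (p i) (q (Suc i))"
    using seg_sum_periodic[of wu m, OF u.weight_periodic] .
  then have u2: "cuttable wu (3/4 * a) (p i + m) (q (Suc i) + m) 1"
    using cuttable_single assms by (simp add: less_imp_le)
  have "cuttable wu (3/4 * a) (q (Suc i)) (q (Suc i) + m) n"
    using cuttable_append[OF u1 u2] two_le_n by simp
  moreover have "cuttable wv (3/4 * b) (q (Suc i)) (q (Suc i) + m) n"
    using v_cuttable_round by simp
  ultimately show ?thesis using fair_cut_if_cuttable_both by blast
qed

lemma fair_cut_if_tail_worth_u:
  assumes interleaved "3/4 * a \<le> seg_sum wu (q (Suc i)) (p (Suc i))"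
  shows fair_cut_exists
proof -
  have u1: "cuttable wu (3/4 * a) (q (Suc i)) (p (Suc i)) 1"
    using cuttable_single assms by (meson less_imp_le)
  have u2: "cuttable wu (3/4 * a) (p (Suc i)) (q (Suc i) + m) (n - 1)"
    using cuttable_widen[OF u_cuttable_round_but_one[of i] _ u.weight_nonneg, of "p (Suc i)" "q (Suc i) + m"]
      assms(1) two_le_n
    by (simp add: less_imp_le)
  have "cuttable wu (3/4 * a) (q (Suc i)) (q (Suc i) + m) n"
    using cuttable_append[OF u1 u2] two_le_n by simp
  moreover have "cuttable wv (3/4 * b) (q (Suc i)) (q (Suc i) + m) n"
    using v_cuttable_round by simp
  ultimately show ?thesis using fair_cut_if_cuttable_both by blast
qed

lemma interleaved_pieces_split:
  assumes interleaved
  shows "seg_sum w (p i) (p (Suc i)) = seg_sum w (p i) (q (Suc i)) + seg_sum w (q (Suc i)) (p (Suc i))"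
    and "seg_sum w (q (Suc i)) (q (Suc (Suc i))) =
      seg_sum w (q (Suc i)) (p (Suc i)) + seg_sum w (p (Suc i)) (q (Suc (Suc i)))"
  using assms seg_sum_split by (meson less_imp_le)+

lemma q_pieces_alternately_worth_u:
  assumes IL: interleaved
    and small: "\<And>i. seg_sum wu (p i) (q (Suc i)) < 3/4 * a \<and> seg_sum wu (q (Suc i)) (p (Suc i)) < 3/4 * a"
  shows "3/4 * a \<le> seg_sum wu (q (Suc i)) (q (Suc (Suc i))) \<or>
    3/4 * a \<le> seg_sum wu (q (Suc (Suc i))) (q (Suc (Suc (Suc i))))"
proof -
  define x where "x j = seg_sum wu (p j) (q (Suc j))" for j
  define y where "y j = seg_sum wu (q (Suc j)) (p (Suc j))" for j
  have "a \<le> x j + y j" for j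
    using u.piece_value[of j] interleaved_pieces_split(1)[OF IL] by (simp add: x_def y_def)
  then have "3/4 * a \<le> y i + x (Suc i) \<or> 3/4 * a \<le> y (Suc i) + x (Suc (Suc i))"
    by (rule one_of_two_sums_large) (use small in \<open>auto simp: x_def y_def\<close>)
  then show ?thesis using interleaved_pieces_split(2)[OF IL] by (simp add: x_def y_def)
qed

lemma p_pieces_alternately_worth_v:
  assumes IL: interleaved
    and small: "\<And>i. seg_sum wv (p i) (q (Suc i)) < 3/4 * b \<and> seg_sum wv (q (Suc i)) (p (Suc i)) < 3/4 * b"
  shows "3/4 * b \<le> seg_sum wv (p (Suc i)) (p (Suc (Suc i))) \<or>
    3/4 * b \<le> seg_sum wv (p (Suc (Suc i))) (p (Suc (Suc (Suc i))))"
proof -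
  define x where "x j = seg_sum wv (q (Suc j)) (p (Suc j))" for j
  define y where "y j = seg_sum wv (p (Suc j)) (q (Suc (Suc j)))" for j
  have "b \<le> x j + y j" for j
    using v.piece_value[of "Suc j"] interleaved_pieces_split(2)[OF IL] by (simp add: x_def y_def)
  then have "3/4 * b \<le> y i + x (Suc i) \<or> 3/4 * b \<le> y (Suc i) + x (Suc (Suc i))"
    by (rule one_of_two_sums_large) (use small in \<open>auto simp: x_def y_def\<close>)
  then show ?thesis using interleaved_pieces_split(1)[OF IL] by (simp add: x_def y_def)
qed

text \<open>With all halves small, the minority type is served by pieces of the majority type's cutting:
  every such piece is good for its own type, and of two consecutive ones at least one is good
  for the minority type.\<close>

lemma fair_cut_if_halves_small:
  assumes IL: interleaved
    and small_u: "\<And>i. seg_sum wu (p i) (q (Suc i)) < 3/4 * a \<and> seg_sum wu (q (Suc i)) (p (Suc i)) < 3/4 * a"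
    and small_v: "\<And>i. seg_sum wv (p i) (q (Suc i)) < 3/4 * b \<and> seg_sum wv (q (Suc i)) (p (Suc i)) < 3/4 * b"
  shows fair_cut_exists
proof (cases "k \<le> l")
  case True
  have "mixed_cuttable wu wv (3/4 * a) (3/4 * b) (q (0 + 1)) (q (0 + 1) + m) k l"
    using periodic_cuts.mixed_cuttable_if_alternating[OF v.shift[of 1] agents,
        where wu=wu and tu="3/4 * a" and tv="3/4 * b"]
      q_pieces_alternately_worth_u[OF IL small_u] True agents u.weight_periodic v.value_nonneg
    by simp
  then show ?thesis by blast
next
  case False
  have "mixed_cuttable wv wu (3/4 * b) (3/4 * a) (p (0 + 1)) (p (0 + 1) + m) l k"
    using periodic_cuts.mixed_cuttable_if_alternating[OF u.shift[of 1],
        where k=l and l=k and wu=wv and tu="3/4 * b" and tv="3/4 * a"]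
      p_pieces_alternately_worth_v[OF IL small_v] False agents u.value_nonneg v.weight_periodic
    by simp
  then show ?thesis using mixed_cuttable_swap by blast
qed

lemma fair_cut_if_aligned:
  assumes "q 0 \<le> p 0" "p 0 < q 1"
  shows fair_cut_exists
proof (cases "\<exists>i. q i \<le> p i \<and> p (Suc i) \<le> q (Suc i)")
  case True
  then show ?thesis using fair_cut_if_u_piece_nested by blast
next
  case not_u_nested: False
  show ?thesis
  proof (cases "\<exists>i. p i \<le> q (Suc i) \<and> q (Suc (Suc i)) \<le> p (Suc i)")
    case True
    then show ?thesis using fair_cut_if_v_piece_nested by blast
  next
    case not_v_nested: False
    have IL: interleaved
      using interleaved_if_not_nested[OF assms] not_u_nested not_v_nested by blast
    show ?thesis
    proof (cases "\<exists>i. 3/4 * b \<le> seg_sum wv (p i) (q (Suc i)) \<or> 3/4 * b \<le> seg_sum wv (q (Suc i)) (p (Suc i))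
                     \<or> 3/4 * a \<le> seg_sum wu (p i) (q (Suc i)) \<or> 3/4 * a \<le> seg_sum wu (q (Suc i)) (p (Suc i))")
      case True
      then show ?thesis
        using fair_cut_if_head_worth_v[OF IL] fair_cut_if_tail_worth_v[OF IL]
          fair_cut_if_head_worth_u[OF IL] fair_cut_if_tail_worth_u[OF IL] by blast
    next
      case False
      then show ?thesis using fair_cut_if_halves_small[OF IL] by (meson not_le)
    qed
  qed
qed

end

lemma fair_cut:
  assumes u: "periodic_cuts m n wu a p" and v: "periodic_cuts m n wv b q"
    and "k + l = n" "0 < m"
  shows "\<exists>s. mixed_cuttable wu wv (3/4 * a) (3/4 * b) s (s + m) k l"
proof -
  have tq: "3/4 * a \<le> a" "3/4 * b \<le> b"
    using periodic_cuts.value_nonneg[OF u] periodic_cuts.value_nonneg[OF v] by simp_all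
  consider "k = 0" | "l = 0" | "1 \<le> k" "1 \<le> l" by linarith
  then show ?thesis
  proof cases
    case 1
    then show ?thesis
      using assms(3) mixed_cuttable_if_cuttable_right[OF periodic_cuts.cuttable_round[OF v tq(2)]]
      by auto
  next
    case 2
    then show ?thesis
      using assms(3) mixed_cuttable_if_cuttable_left[OF periodic_cuts.cuttable_round[OF u tq(1)]]
      by auto
  next
    case 3
    define p' where "p' i = p (i + q 0 * n)" for i
    have "q 0 * 1 \<le> q 0 * m" using assms(4) by (intro mult_le_mono2) simp
    then have "q 0 \<le> p 0 + q 0 * m" by linarith
    then have "q 0 \<le> p' 0"
      using periodic_cuts.cut_periodic_mult[OF u, of 0 "q 0"] by (simp add: p'_def)
    then obtain d where d: "q d \<le> p' 0" "p' 0 < q (Suc d)"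
      using periodic_cuts.cut_straddles[OF v assms(4)] by blast
    interpret aligned: cut_pair m n wu a p' wv b "\<lambda>i. q (i + d)" k l
      unfolding p'_def using periodic_cuts.shift[OF u] periodic_cuts.shift[OF v] assms(3) 3
      by (intro cut_pair.intro cut_pair_axioms.intro) auto
    show ?thesis using aligned.fair_cut_if_aligned d by simp
  qed
qed

definition arc :: "nat \<Rightarrow> nat \<Rightarrow> nat \<Rightarrow> nat set" where
  "arc m x y = (\<lambda>i. i mod m) ` {x..<y}"

lemma mod_inj_window:
  fixes i j x m :: nat
  assumes "x \<le> i" "x \<le> j" "i < x + m" "j < x + m" "i mod m = j mod m"
  shows "i = j"
proof -
  have "i' = j'" if "x \<le> i'" "i' \<le> j'" "j' < x + m" "i' mod m = j' mod m" for i' j' :: nat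
  proof -
    have "m dvd j' - i'" using mod_eq_dvd_iff_nat[OF that(2), of m] that(4) by simp
    moreover have "j' - i' < m" using that by linarith
    ultimately have "j' - i' = 0" using nat_dvd_not_less by blast
    then show ?thesis using that(2) by simp
  qed
  from this[of i j] this[of j i] show ?thesis using assms by (cases "i \<le> j") auto
qed

lemma arc_subset: "0 < m \<Longrightarrow> arc m x y \<subseteq> {0..<m}"
  unfolding arc_def by auto

lemma atLeastLessThan_eq_image_add: "{x..<x + L} = (\<lambda>j. x + j) ` {..<L::nat}"
  using image_add_atLeastLessThan[of x 0 L] by (simp add: lessThan_atLeast0 add.commute)

lemma arc_eq_image: "arc m x (x + L) = (\<lambda>j. (x + j) mod m) ` {..<L}"
  unfolding arc_def atLeastLessThan_eq_image_add by (simp add: image_image)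

lemma util_arc:
  assumes "y \<le> x + m"
  shows "util u (arc m x y) = seg_sum (\<lambda>i. u (i mod m)) x y"
proof -
  have "inj_on (\<lambda>i. i mod m) {x..<y}"
  proof (rule inj_onI)
    fix i j assume "i \<in> {x..<y}" "j \<in> {x..<y}" "i mod m = j mod m"
    then show "i = j" using assms mod_inj_window[of x i j m] by simp
  qed
  then show ?thesis unfolding util_def arc_def seg_sum_def by (simp add: sum.reindex)
qed

lemma arc_is_bundle:
  assumes "0 < m"
  shows "is_bundle m (arc m x y)"
proof -
  let ?S = "arc m x y"
  let ?R = "{(a, b). a \<in> ?S \<and> b \<in> ?S \<and> cycle_adj m a b}"
  have from_start: "(x mod m, z mod m) \<in> ?R\<^sup>*" if "x \<le> z" "z < y" for z
    using that
  proof (induction z)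
    case (Suc z)
    show ?case
    proof (cases "x \<le> z")
      case True
      have "z mod m \<in> ?S" "Suc z mod m \<in> ?S" using True Suc.prems unfolding arc_def by auto
      moreover have "cycle_adj m (z mod m) (Suc z mod m)"
        unfolding cycle_adj_def using assms by (simp add: mod_Suc_eq)
      ultimately show ?thesis using Suc True by (auto intro: rtrancl_into_rtrancl)
    next
      case False
      then show ?thesis using Suc.prems by (simp add: le_Suc_eq)
    qed
  qed simp
  have "sym (?R\<^sup>*)" by (rule sym_rtrancl) (auto simp: sym_def cycle_adj_def)
  have "(a, b) \<in> ?R\<^sup>*" if ab: "a \<in> ?S" "b \<in> ?S" for a b
  proof -
    obtain za zb where "a = za mod m" "b = zb mod m" "za \<in> {x..<y}" "zb \<in> {x..<y}"
      using ab unfolding arc_def by blast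
    then have "(x mod m, a) \<in> ?R\<^sup>*" "(x mod m, b) \<in> ?R\<^sup>*" using from_start by auto
    then show ?thesis using \<open>sym (?R\<^sup>*)\<close> by (meson rtrancl_trans symD)
  qed
  then show ?thesis unfolding is_bundle_def using arc_subset[OF assms] by blast
qed

lemma chain_mono: "\<forall>j<n. c j \<le> (c (Suc j) :: nat) \<Longrightarrow> i \<le> i' \<Longrightarrow> i' \<le> n \<Longrightarrow> c i \<le> c i'"
  by (rule lift_Suc_mono_le_ivl[of "{..<n}"]) auto

lemma chain_segment_containing:
  "\<forall>j<n. c j \<le> (c (Suc j) :: nat) \<Longrightarrow> c 0 \<le> x \<Longrightarrow> x < c n \<Longrightarrow> \<exists>j<n. c j \<le> x \<and> x < c (Suc j)"
proof (induction n)
  case (Suc n)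
  then show ?case by (cases "x < c n") (auto intro: less_SucI)
qed simp

lemma arcs_of_chain_disjoint:
  assumes mono: "\<forall>j<n. c j \<le> c (Suc j)" and round: "c n = c 0 + m"
    and "j < n" "j' < n" "j \<noteq> j'"
  shows "arc m (c j) (c (Suc j)) \<inter> arc m (c j') (c (Suc j')) = {}"
proof -
  have "arc m (c j) (c (Suc j)) \<inter> arc m (c j') (c (Suc j')) = {}"
    if "j < j'" "j' < n" for j j'
  proof (rule ccontr)
    assume "arc m (c j) (c (Suc j)) \<inter> arc m (c j') (c (Suc j')) \<noteq> {}"
    then obtain z where z: "z \<in> arc m (c j) (c (Suc j))" "z \<in> arc m (c j') (c (Suc j'))" by blast
    obtain y where "y \<in> {c j..<c (Suc j)}" "z = y mod m" using z(1) unfolding arc_def by blast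
    moreover obtain y' where "y' \<in> {c j'..<c (Suc j')}" "z = y' mod m" using z(2) unfolding arc_def by blast
    ultimately have y: "y \<in> {c j..<c (Suc j)}" "y' \<in> {c j'..<c (Suc j')}" "y mod m = y' mod m" by auto
    have "c (Suc j) \<le> c j'" "c 0 \<le> c j" "c (Suc j') \<le> c n"
      using chain_mono[OF mono] that by auto
    then have "y = y'" using y round mod_inj_window[of "c 0" y y' m] by simp
    then show False using y \<open>c (Suc j) \<le> c j'\<close> by auto
  qed
  then show ?thesis using assms(3-5) by (metis Int_commute linorder_neqE_nat)
qed

lemma arcs_of_chain_cover:
  assumes "0 < m" and mono: "\<forall>j<n. c j \<le> c (Suc j)" and round: "c n = c 0 + m" and "g < m"
  shows "\<exists>j<n. g \<in> arc m (c j) (c (Suc j))"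
proof -
  define t where "t = (if c 0 mod m \<le> g then c 0 div m else c 0 div m + 1)"
  define y where "y = g + t * m"
  have "y mod m = g" unfolding y_def using \<open>g < m\<close> by simp
  moreover have "c 0 \<le> y \<and> y < c n"
  proof -
    have dm: "c 0 div m * m + c 0 mod m = c 0" by (rule div_mult_mod_eq)
    have "c 0 mod m < m" using \<open>0 < m\<close> by simp
    show ?thesis
    proof (cases "c 0 mod m \<le> g")
      case True
      then have "y = g + c 0 div m * m" by (simp add: y_def t_def)
      then show ?thesis using dm round \<open>g < m\<close> True by linarith
    next
      case False
      then have "y = g + c 0 div m * m + m" by (simp add: y_def t_def)
      then show ?thesis using dm round \<open>c 0 mod m < m\<close> False by linarith
    qed
  qed
  ultimately show ?thesis
    using chain_segment_containing[OF mono] unfolding arc_def by (metis atLeastLessThan_iff image_eqI)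
qed

lemma split_of_chain:
  assumes "0 < m" and mono: "\<forall>j<n. c j \<le> c (Suc j)" and round: "c n = c 0 + m"
    and \<sigma>: "bij_betw \<sigma> {..<n} {..<n}"
  shows "is_split m n (\<lambda>i. arc m (c (\<sigma> i)) (c (Suc (\<sigma> i))))"
  unfolding is_split_def
proof (intro conjI allI impI)
  show "is_bundle m (arc m (c (\<sigma> i)) (c (Suc (\<sigma> i))))" for i
    using arc_is_bundle[OF assms(1)] .
next
  fix i j assume "i < n" "j < n" "i \<noteq> j"
  then have "\<sigma> i < n" "\<sigma> j < n" "\<sigma> i \<noteq> \<sigma> j"
    using \<sigma> unfolding bij_betw_def inj_on_def by auto
  then show "arc m (c (\<sigma> i)) (c (Suc (\<sigma> i))) \<inter> arc m (c (\<sigma> j)) (c (Suc (\<sigma> j))) = {}"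
    using arcs_of_chain_disjoint[OF mono round] by blast
next
  have "{0..<m} \<subseteq> (\<Union>j<n. arc m (c j) (c (Suc j)))"
    using arcs_of_chain_cover[OF assms(1) mono round] by fastforce
  also have "\<dots> = (\<Union>j\<in>\<sigma> ` {..<n}. arc m (c j) (c (Suc j)))"
    using bij_betw_imp_surj_on[OF \<sigma>] by simp
  also have "\<dots> = (\<Union>i<n. arc m (c (\<sigma> i)) (c (Suc (\<sigma> i))))"
    by simp
  finally show "(\<Union>i<n. arc m (c (\<sigma> i)) (c (Suc (\<sigma> i)))) = {0..<m}"
    using arc_subset[OF assms(1)] by blast
qed

lemma exists_bij_matching_labels:
  fixes n :: nat
  assumes "card {i. i < n \<and> P i} = card {j. j < n \<and> Q j}"
  obtains \<sigma> where "bij_betw \<sigma> {..<n} {..<n}" "\<And>i. i < n \<Longrightarrow> Q (\<sigma> i) \<longleftrightarrow> P i"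
proof -
  let ?A = "{i. i < n \<and> P i}" and ?B = "{j. j < n \<and> Q j}"
  let ?A' = "{i. i < n \<and> \<not> P i}" and ?B' = "{j. j < n \<and> \<not> Q j}"
  have fin: "finite ?A" "finite ?B" "finite ?A'" "finite ?B'" by simp_all
  have "?A' = {..<n} - ?A" "?B' = {..<n} - ?B" by auto
  then have "card ?A' = card ?B'" using assms by (simp add: card_Diff_subset subset_eq)
  then obtain g where g: "bij_betw g ?A' ?B'" using finite_same_card_bij[OF fin(3,4)] by blast
  obtain f where f: "bij_betw f ?A ?B" using finite_same_card_bij[OF fin(1,2) assms] by blast
  define \<sigma> where "\<sigma> i = (if P i then f i else g i)" for i
  have "bij_betw \<sigma> ?A ?B" using f by (rule bij_betw_cong[THEN iffD1, rotated]) (simp add: \<sigma>_def)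
  moreover have "bij_betw \<sigma> ?A' ?B'" using g by (rule bij_betw_cong[THEN iffD1, rotated]) (simp add: \<sigma>_def)
  ultimately have "bij_betw \<sigma> (?A \<union> ?A') (?B \<union> ?B')" by (rule bij_betw_combine) auto
  moreover have "?A \<union> ?A' = {..<n}" "?B \<union> ?B' = {..<n}" by auto
  moreover have "Q (\<sigma> i) \<longleftrightarrow> P i" if "i < n" for i
  proof (cases "P i")
    case True
    then have "\<sigma> i \<in> ?B" using f that unfolding bij_betw_def \<sigma>_def by auto
    then show ?thesis using True by simp
  next
    case False
    then have "\<sigma> i \<in> ?B'" using g that unfolding bij_betw_def \<sigma>_def by auto
    then show ?thesis using False by simp
  qed
  ultimately show ?thesis using that by auto
qed

lemma util_cong: "S \<subseteq> {0..<m} \<Longrightarrow> (\<And>g. g < m \<Longrightarrow> u g = u' g) \<Longrightarrow> util u S = util u' S"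
  unfolding util_def by (intro sum.cong) auto

lemma split_subset: "is_split m n P \<Longrightarrow> i < n \<Longrightarrow> P i \<subseteq> {0..<m}"
  unfolding is_split_def is_bundle_def by blast

lemma mms_cong:
  assumes "\<And>g. g < m \<Longrightarrow> u g = u' g"
  shows "mms m n u = mms m n u'"
  unfolding mms_def
proof (rule SUP_cong)
  fix P assume "P \<in> {P. is_split m n P}"
  then have "util u (P i) = util u' (P i)" if "i \<in> {0..<n}" for i
    using util_cong[OF split_subset assms] that by auto
  then show "(MIN i\<in>{0..<n}. util u (P i)) = (MIN i\<in>{0..<n}. util u' (P i))"
    by (intro arg_cong[where f=Min] image_cong) auto
qed simp

lemma mms_attained:
  assumes "0 < m" "1 \<le> n"
  obtains P where "is_split m n P" "(MIN i\<in>{0..<n}. util u (P i)) = mms m n u"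
proof -
  define f where "f P = (MIN i\<in>{0..<n}. util u (P i))" for P :: "nat \<Rightarrow> nat set"
  let ?X = "f ` {P. is_split m n P}"
  have "?X \<subseteq> f ` ({0..<n} \<rightarrow>\<^sub>E Pow {0..<m})"
  proof
    fix v assume "v \<in> ?X"
    then obtain P where P: "is_split m n P" "v = f P" by auto
    have "restrict P {0..<n} \<in> {0..<n} \<rightarrow>\<^sub>E Pow {0..<m}" using split_subset[OF P(1)] by auto
    moreover have "f (restrict P {0..<n}) = f P" unfolding f_def
      by (intro arg_cong[where f=Min] image_cong) auto
    ultimately show "v \<in> f ` ({0..<n} \<rightarrow>\<^sub>E Pow {0..<m})" unfolding P(2) by (metis image_eqI)
  qed
  then have fin: "finite ?X" by (rule finite_subset) (simp add: finite_PiE)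
  define P0 where "P0 i = (if i = 0 then {0..<m} else {})" for i :: nat
  have "arc m 0 m = {0..<m}" using arc_subset[OF assms(1)] arc_eq_image[of m 0 m] by auto
  then have "is_split m n P0"
    unfolding is_split_def P0_def using arc_is_bundle[OF assms(1), of 0 m] assms(2)
    by (auto simp: is_bundle_def)
  then have ne: "?X \<noteq> {}" by blast
  have "mms m n u = Max ?X" unfolding mms_def f_def using cSup_eq_Max[OF fin ne] by (simp add: f_def)
  then have "mms m n u \<in> ?X" using Max_in[OF fin ne] by simp
  then show ?thesis using that unfolding f_def by auto
qed

lemma rotation_bij:
  fixes c m :: nat
  assumes "0 < m"
  shows "bij_betw (\<lambda>j. (c + j) mod m) {..<m} {0..<m}"
proof -
  have inj: "inj_on (\<lambda>j. (c + j) mod m) {..<m}"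
  proof (rule inj_onI)
    fix i j assume "i \<in> {..<m}" "j \<in> {..<m}" "(c + i) mod m = (c + j) mod m"
    then show "i = j" using mod_inj_window[of c "c + i" "c + j" m] by simp
  qed
  moreover have "(\<lambda>j. (c + j) mod m) ` {..<m} = {0..<m}"
    using assms card_image[OF inj] by (intro card_subset_eq) auto
  ultimately show ?thesis unfolding bij_betw_def ..
qed

lemma rotation_preimage_image:
  fixes c m :: nat
  assumes "0 < m" "S \<subseteq> {0..<m}"
  shows "S = (\<lambda>j. (c + j) mod m) ` {j. j < m \<and> (c + j) mod m \<in> S}"
proof
  show "S \<subseteq> (\<lambda>j. (c + j) mod m) ` {j. j < m \<and> (c + j) mod m \<in> S}"
  proof
    fix x assume "x \<in> S"
    then have "x \<in> (\<lambda>j. (c + j) mod m) ` {..<m}"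
      using assms(2) bij_betw_imp_surj_on[OF rotation_bij[OF assms(1)]] by blast
    then show "x \<in> (\<lambda>j. (c + j) mod m) ` {j. j < m \<and> (c + j) mod m \<in> S}" using \<open>x \<in> S\<close> by blast
  qed
qed auto

lemma rotation_adjacent:
  fixes c j j' m :: nat
  assumes "j < m - 1" "j' < m - 1" "cycle_adj m ((c + j) mod m) ((c + j') mod m)"
  shows "j' = Suc j \<or> j = Suc j'"
proof -
  have "(c + j') mod m = (c + Suc j) mod m \<or> (c + j) mod m = (c + Suc j') mod m"
    using assms(3) unfolding cycle_adj_def by (simp add: mod_Suc_eq)
  moreover have "c + j' = c + Suc j" if "(c + j') mod m = (c + Suc j) mod m"
    using assms(1,2) that mod_inj_window[of c "c + j'" "c + Suc j" m] by linarith
  moreover have "c + j = c + Suc j'" if "(c + j) mod m = (c + Suc j') mod m"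
    using assms(1,2) that mod_inj_window[of c "c + j" "c + Suc j'" m] by linarith
  ultimately show ?thesis by auto
qed

lemma bundle_rotation_convex:
  assumes S_bundle: "is_bundle m S" and gap: "(c + (m - 1)) mod m \<notin> S"
    and j: "j1 < j2" "j2 < j3" "j3 < m" "(c + j1) mod m \<in> S" "(c + j3) mod m \<in> S"
  shows "(c + j2) mod m \<in> S"
proof (rule ccontr)
  assume out: "(c + j2) mod m \<notin> S"
  let ?\<phi> = "\<lambda>j. (c + j) mod m"
  let ?R = "{(x, y). x \<in> S \<and> y \<in> S \<and> cycle_adj m x y}"
  have S: "S \<subseteq> ?\<phi> ` {..<m}"
    using S_bundle rotation_bij[of m c] j unfolding is_bundle_def bij_betw_def by auto
  have "\<exists>j<j2. ?\<phi> j = z" if "(?\<phi> j1, z) \<in> ?R\<^sup>*" for z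
    using that
  proof (induction rule: rtrancl_induct)
    case (step y z)
    then obtain i where i: "i < j2" "?\<phi> i = y" by blast
    obtain i' where i': "i' < m" "?\<phi> i' = z" using step.hyps(2) S by auto
    have "i' \<noteq> m - 1" "i' \<noteq> j2" using i' step.hyps(2) gap out by auto
    then have "i' = Suc i \<or> i = Suc i'"
      using rotation_adjacent[of i m i' c] i i' step.hyps(2) j by auto
    then have "i' < j2" using i(1) \<open>i' \<noteq> j2\<close> by auto
    then show ?case using i'(2) by blast
  qed (use j in blast)
  moreover have "(?\<phi> j1, ?\<phi> j3) \<in> ?R\<^sup>*" using S_bundle j unfolding is_bundle_def by blast
  ultimately obtain i where "i < j2" "?\<phi> i = ?\<phi> j3" by blast
  then show False using j mod_inj_window[of c "c + i" "c + j3" m] by simp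
qed

lemma convex_nat_set_eq_interval:
  fixes T :: "nat set"
  assumes "finite T" "T \<noteq> {}" "\<And>i j k. i \<in> T \<Longrightarrow> k \<in> T \<Longrightarrow> i < j \<Longrightarrow> j < k \<Longrightarrow> j \<in> T"
  shows "T = {Min T..<Min T + card T}"
proof -
  define lo hi where "lo = Min T" and "hi = Max T"
  have ends: "lo \<in> T" "hi \<in> T" "lo \<le> hi" using assms(1,2) by (simp_all add: lo_def hi_def)
  have T: "T = {lo..hi}"
  proof
    show "{lo..hi} \<subseteq> T"
    proof
      fix j assume "j \<in> {lo..hi}"
      then consider "j = lo" | "j = hi" | "lo < j" "j < hi" by fastforce
      then show "j \<in> T" using ends assms(3) by cases blast+
    qed
  qed (use assms(1) in \<open>auto simp: lo_def hi_def\<close>)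
  then have "lo + card T = Suc hi" using ends(3) by simp
  then show ?thesis unfolding lo_def[symmetric] using T by (simp add: atLeastLessThanSuc_atLeastAtMost)
qed

text \<open>Rotate the cycle so that a good outside S comes last; then S occupies a convex set of
  positions, since a path inside S cannot go around through the missing good.\<close>

lemma bundle_eq_arc:
  assumes "0 < m" "is_bundle m S" "S \<noteq> {}" "S \<noteq> {0..<m}"
  obtains s where "S = arc m s (s + card S)" "card S < m"
proof -
  have S_sub: "S \<subseteq> {0..<m}" using assms(2) unfolding is_bundle_def by blast
  then have "\<not> {0..<m} \<subseteq> S" using assms(4) by blast
  then obtain g where "g \<in> {0..<m}" "g \<notin> S" by blast
  then have g: "g < m" "g \<notin> S" by simp_all
  define c where "c = Suc g"
  let ?\<phi> = "\<lambda>j. (c + j) mod m"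
  define T where "T = {j. j < m \<and> ?\<phi> j \<in> S}"
  have "c + (m - 1) = g + m" using assms(1) by (simp add: c_def)
  then have gap: "?\<phi> (m - 1) \<notin> S" using g by simp
  have T_sub: "T \<subseteq> {..<m - 1}"
  proof
    fix j assume "j \<in> T"
    then have "j < m" "j \<noteq> m - 1" using gap unfolding T_def by auto
    then show "j \<in> {..<m - 1}" by simp
  qed
  have bij: "bij_betw ?\<phi> {..<m} {0..<m}" using rotation_bij[OF assms(1)] .
  have S_eq: "S = ?\<phi> ` T" unfolding T_def using rotation_preimage_image[OF assms(1) S_sub] .
  have card_eq: "card S = card T"
    unfolding S_eq using T_sub by (intro card_image inj_on_subset[OF bij_betw_imp_inj_on[OF bij]]) auto
  have "T = {Min T..<Min T + card T}"
  proof (rule convex_nat_set_eq_interval)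
    show "finite T" "T \<noteq> {}" using T_sub S_eq assms(3) finite_subset by auto
    show "j \<in> T" if "i \<in> T" "k \<in> T" "i < j" "j < k" for i j k
      using that bundle_rotation_convex[OF assms(2) gap, of i j k] unfolding T_def by auto
  qed
  then obtain lo L where T: "T = {lo..<lo + L}" and L: "L = card S" unfolding card_eq by blast
  have "S = (\<lambda>j. (c + lo + j) mod m) ` {..<L}"
    unfolding S_eq T atLeastLessThan_eq_image_add image_image by (simp add: add.assoc)
  then have "S = arc m (c + lo) (c + lo + card S)" unfolding L by (simp add: arc_eq_image)
  moreover have "card S < m" using card_eq card_mono[OF _ T_sub] assms(1) by simp
  ultimately show ?thesis using that by blast
qed

lemma arc_start:
  assumes "0 < m" "S = arc m s (s + L)" "x mod m \<in> S" "(x + m - 1) mod m \<notin> S"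
  shows "S = arc m x (x + L)"
proof -
  obtain j where j: "j < L" "x mod m = (s + j) mod m" using assms(2,3) arc_eq_image by auto
  show ?thesis
  proof (cases j)
    case 0
    then have "(x + i) mod m = (s + i) mod m" for i using j by (metis add_0_right mod_add_left_eq)
    then show ?thesis using assms(2) by (simp add: arc_eq_image)
  next
    case (Suc j')
    have "(x + m - 1) mod m = (x + (m - 1)) mod m" using assms(1) by simp
    also have "\<dots> = ((s + j) mod m + (m - 1)) mod m" using j(2) by (metis mod_add_left_eq)
    also have "\<dots> = (s + j + (m - 1)) mod m" by (rule mod_add_left_eq)
    also have "s + j + (m - 1) = (s + j') + m" using Suc assms(1) by simp
    finally have "(x + m - 1) mod m = (s + j') mod m" by simp
    then have "(x + m - 1) mod m \<in> S" using assms(2) arc_eq_image Suc j by auto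
    then show ?thesis using assms(4) by simp
  qed
qed

locale arc_split =
  fixes m n :: nat and P :: "nat \<Rightarrow> nat set"
  assumes pos: "0 < m" and split: "is_split m n P"
    and not_full: "\<And>i. i < n \<Longrightarrow> P i \<noteq> {0..<m}"
begin

definition owner :: "nat \<Rightarrow> nat" where
  "owner x = (SOME i. i < n \<and> x mod m \<in> P i)"

definition len :: "nat \<Rightarrow> nat" where
  "len x = card (P (owner x))"

definition is_start :: "nat \<Rightarrow> bool" where
  "is_start x \<longleftrightarrow> (x + m - 1) mod m \<notin> P (owner x)"

lemma owner: "owner x < n \<and> x mod m \<in> P (owner x)"
proof -
  have "x mod m \<in> (\<Union>i<n. P i)" using split pos unfolding is_split_def by simp
  then have "\<exists>i. i < n \<and> x mod m \<in> P i" by blast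
  then show ?thesis unfolding owner_def by (rule someI_ex)
qed

lemma owner_eq: "i < n \<Longrightarrow> x mod m \<in> P i \<Longrightarrow> owner x = i"
  using owner[of x] split unfolding is_split_def by blast

lemma start_arc:
  assumes "is_start x"
  shows "P (owner x) = arc m x (x + len x) \<and> 1 \<le> len x \<and> len x < m"
proof -
  have owner_bundle: "is_bundle m (P (owner x))" using split owner unfolding is_split_def by blast
  have ne: "P (owner x) \<noteq> {}" using owner by blast
  obtain s where s: "P (owner x) = arc m s (s + len x)" "len x < m"
    using bundle_eq_arc[OF pos owner_bundle ne not_full[OF conjunct1[OF owner]]] unfolding len_def by blast
  have "1 \<le> len x"
    using ne split_subset[OF split conjunct1[OF owner]] finite_subset unfolding len_def
    by (fastforce simp: Suc_le_eq card_gt_0_iff)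
  then show ?thesis
    using arc_start[OF pos s(1) conjunct2[OF owner]] assms s(2) unfolding is_start_def by blast
qed

lemma start_after_arc:
  assumes "is_start x"
  shows "is_start (x + len x)"
proof -
  let ?y = "x + len x"
  note A = start_arc[OF assms]
  have "?y + m - 1 = (x + len x - 1) + m" using A by simp
  moreover have "(x + len x - 1) mod m \<in> P (owner x)"
    using A unfolding arc_def by force
  ultimately have pred_in: "(?y + m - 1) mod m \<in> P (owner x)" by simp
  have "?y mod m \<notin> P (owner x)"
  proof
    assume "?y mod m \<in> P (owner x)"
    then obtain z where "z \<in> {x..<?y}" "?y mod m = z mod m" using A unfolding arc_def by auto
    then show False using mod_inj_window[of x ?y z m] A by simp
  qed
  then have "owner ?y \<noteq> owner x" using owner[of ?y] by auto
  then show ?thesis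
    using pred_in owner[of ?y] owner[of x] split unfolding is_start_def is_split_def by blast
qed

lemma arc_ends_before_round:
  assumes "is_start s" "is_start x" "x < s + m"
  shows "x + len x \<le> s + m"
proof (rule ccontr)
  assume "\<not> x + len x \<le> s + m"
  then have "s + m \<in> {x..<x + len x}" "s + m - 1 \<in> {x..<x + len x}" using assms(3) pos by auto
  then have "(s + m) mod m \<in> arc m x (x + len x)" "(s + m - 1) mod m \<in> arc m x (x + len x)"
    unfolding arc_def by (blast intro: imageI)+
  then have "(s + m) mod m \<in> P (owner x)" "(s + m - 1) mod m \<in> P (owner x)"
    using start_arc[OF assms(2)] by simp_all
  moreover from this have "owner s = owner x" using owner_eq owner by simp
  ultimately show False using assms(1) unfolding is_start_def by simp
qed

lemma exists_start: "\<exists>s. is_start s"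
proof -
  let ?i = "owner 0"
  have owner_bundle: "is_bundle m (P ?i)" using split owner unfolding is_split_def by blast
  have ne: "P ?i \<noteq> {}" using owner by blast
  obtain s where s: "P ?i = arc m s (s + card (P ?i))" "card (P ?i) < m"
    using bundle_eq_arc[OF pos owner_bundle ne not_full[OF conjunct1[OF owner]]] by blast
  have "0 < card (P ?i)"
    using ne split_subset[OF split conjunct1[OF owner]] finite_subset card_gt_0_iff by blast
  then have "s mod m \<in> arc m s (s + card (P ?i))" unfolding arc_def by simp
  then have "s mod m \<in> P ?i" using s(1) by simp
  then have "owner s = ?i" using owner_eq owner by blast
  moreover have "(s + m - 1) mod m \<notin> P ?i"
  proof
    assume "(s + m - 1) mod m \<in> P ?i"
    then have "(s + m - 1) mod m \<in> (\<lambda>i. i mod m) ` {s..<s + card (P ?i)}"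
      using s(1) unfolding arc_def by simp
    then obtain z where "z \<in> {s..<s + card (P ?i)}" "(s + m - 1) mod m = z mod m" by blast
    then show False using mod_inj_window[of s "s + m - 1" z m] s(2) pos by (simp, linarith)
  qed
  ultimately have "is_start s" unfolding is_start_def by simp
  then show ?thesis ..
qed

definition walk :: "nat \<Rightarrow> nat \<Rightarrow> nat" where
  "walk s t = ((\<lambda>x. if x < s + m then x + len x else x) ^^ t) s"

lemma walk_0 [simp]: "walk s 0 = s"
  by (simp add: walk_def)

lemma walk_Suc: "walk s (Suc t) = (if walk s t < s + m then walk s t + len (walk s t) else walk s t)"
  by (simp add: walk_def)

lemma walk_mono: "t \<le> t' \<Longrightarrow> walk s t \<le> walk s t'"
  by (rule lift_Suc_mono_le) (simp_all add: walk_Suc)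

lemma walk_invariant:
  assumes "is_start s"
  shows "s \<le> walk s t \<and> walk s t \<le> s + m \<and> is_start (walk s t)"
proof (induction t)
  case (Suc t)
  then show ?case
    using arc_ends_before_round[OF assms] start_after_arc by (auto simp: walk_Suc)
qed (use assms in simp)

lemma walk_owners_distinct:
  assumes "is_start s" "t < t'" "walk s t' < s + m"
  shows "owner (walk s t) \<noteq> owner (walk s t')"
proof
  assume eq: "owner (walk s t) = owner (walk s t')"
  let ?x = "walk s t" and ?y = "walk s t'"
  have inv: "s \<le> ?x" "is_start ?x" using walk_invariant[OF assms(1)] by auto
  note A = start_arc[OF inv(2)]
  have "?x < s + m" using walk_mono[of t t' s] assms by simp
  then have "walk s (Suc t) = ?x + len ?x" by (simp add: walk_Suc)
  then have after: "?x + len ?x \<le> ?y" using walk_mono[of "Suc t" t' s] assms(2) by simp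
  have "?y mod m \<in> arc m ?x (?x + len ?x)" using owner[of ?y] eq A by simp
  then obtain z where "z \<in> {?x..<?x + len ?x}" "?y mod m = z mod m" unfolding arc_def by blast
  then show False using mod_inj_window[of ?x ?y z m] after inv(1) assms(3) A by simp
qed

lemma walk_completes:
  assumes "is_start s"
  shows "walk s n = s + m"
proof (rule ccontr)
  assume "walk s n \<noteq> s + m"
  then have "walk s n < s + m" using walk_invariant[OF assms, of n] by linarith
  then have below: "walk s t < s + m" if "t \<le> n" for t using walk_mono[OF that, of s] by simp
  have "inj_on (\<lambda>t. owner (walk s t)) {..n}"
  proof (rule inj_onI)
    fix t t' assume "t \<in> {..n}" "t' \<in> {..n}" "owner (walk s t) = owner (walk s t')"
    then show "t = t'"
      using walk_owners_distinct[OF assms _ below] by (metis atMost_iff linorder_neqE_nat)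
  qed
  moreover have "(\<lambda>t. owner (walk s t)) ` {..n} \<subseteq> {..<n}" using owner by auto
  ultimately have "card {..n} \<le> card {..<n}" by (intro card_inj_on_le) auto
  then show False by simp
qed

lemma walk_step_arc:
  assumes "is_start s" "walk s t < s + m"
  shows "arc m (walk s t) (walk s (Suc t)) = P (owner (walk s t))"
  using start_arc walk_invariant[OF assms(1)] assms(2) by (simp add: walk_Suc)

lemma empty_bundle_if_walk_stops:
  assumes "is_start s" "j < n" "\<not> walk s j < s + m"
  shows "\<exists>i<n. P i = {}"
proof -
  define T where "T = (LEAST t. \<not> walk s t < s + m)"
  have "T \<le> j" unfolding T_def using assms(3) by (rule Least_le)
  have before: "walk s t < s + m" if "t < T" for t using not_less_Least[OF that[unfolded T_def]] by simp
  have "walk s T = s + m"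
    using LeastI[of "\<lambda>t. \<not> walk s t < s + m", OF assms(3)] walk_invariant[OF assms(1), of T]
    unfolding T_def by simp
  let ?O = "(\<lambda>t. owner (walk s t)) ` {..<T}"
  have "card ?O < n"
    using card_image_le[of "{..<T}" "\<lambda>t. owner (walk s t)"] \<open>T \<le> j\<close> assms(2) by simp
  then obtain i where i: "i < n" "i \<notin> ?O" using card_mono[of ?O "{..<n}"] by force
  have "P i = {}"
  proof (rule ccontr)
    assume "P i \<noteq> {}"
    then obtain g where g: "g \<in> P i" by auto
    then have "g < m" using split_subset[OF split i(1)] by auto
    have "\<forall>t<T. walk s t \<le> walk s (Suc t)" "walk s T = walk s 0 + m"
      using walk_mono \<open>walk s T = s + m\<close> by simp_all
    then obtain t where t: "t < T" "g \<in> arc m (walk s t) (walk s (Suc t))"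
      using arcs_of_chain_cover[OF pos _ _ \<open>g < m\<close>] by blast
    then have "g \<in> P (owner (walk s t))" using walk_step_arc[OF assms(1) before] by simp
    then have "i = owner (walk s t)" using owner g i(1) split unfolding is_split_def by blast
    then show False using i t by auto
  qed
  then show ?thesis using i by blast
qed

lemma chain_of_arc_split:
  assumes "\<And>i. i < n \<Longrightarrow> a \<le> util u (P i)"
  shows "\<exists>c. (\<forall>j<n. c j \<le> c (Suc j)) \<and> c n = c 0 + m \<and>
           (\<forall>j<n. a \<le> seg_sum (\<lambda>x. u (x mod m)) (c j) (c (Suc j)))"
proof -
  obtain s where s: "is_start s" using exists_start by blast
  have "a \<le> seg_sum (\<lambda>x. u (x mod m)) (walk s j) (walk s (Suc j))" if j: "j < n" for j
  proof (cases "walk s j < s + m")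
    case True
    have "walk s (Suc j) \<le> walk s j + m" using walk_invariant[OF s, of "Suc j"] walk_invariant[OF s, of j] by simp
    then have "seg_sum (\<lambda>x. u (x mod m)) (walk s j) (walk s (Suc j)) = util u (P (owner (walk s j)))"
      using util_arc[of "walk s (Suc j)" "walk s j" m u] walk_step_arc[OF s True] by simp
    then show ?thesis using assms[OF conjunct1[OF owner]] by simp
  next
    case False
    then obtain i where "i < n" "P i = {}" using empty_bundle_if_walk_stops[OF s j] by blast
    then have "a \<le> 0" using assms[of i] by (simp add: util_def)
    then show ?thesis using False by (simp add: walk_Suc seg_sum_def)
  qed
  then show ?thesis using walk_mono walk_completes[OF s] by (intro exI[of _ "walk s"]) simp
qed

end

lemma chain_of_split:
  assumes "0 < m" "1 \<le> n" and P: "is_split m n P" and val: "\<And>i. i < n \<Longrightarrow> a \<le> util u (P i)"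
  obtains c where "\<forall>j<n. c j \<le> c (Suc j)" "c n = c 0 + m"
    "\<forall>j<n. a \<le> seg_sum (\<lambda>x. u (x mod m)) (c j) (c (Suc j))"
proof (cases "\<exists>i0<n. P i0 = {0..<m}")
  case True
  then obtain i0 where i0: "i0 < n" "P i0 = {0..<m}" by blast
  define c where "c j = (if j = 0 then 0 else m)" for j :: nat
  have "a \<le> seg_sum (\<lambda>x. u (x mod m)) (c j) (c (Suc j))" if "j < n" for j
  proof (cases "j = 0")
    case True
    have "arc m 0 m = {0..<m}" using arc_subset[OF assms(1)] arc_eq_image[of m 0 m] by auto
    then show ?thesis using util_arc[of m 0 m u] val[OF i0(1)] i0(2) True by (simp add: c_def)
  next
    case False
    define i :: nat where "i = (if i0 = 0 then 1 else 0)"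
    have "i < n" "i \<noteq> i0" using that False by (auto simp: i_def)
    then have "P i = {}" using P i0 split_subset[OF P] unfolding is_split_def by blast
    then have "a \<le> 0" using val[OF \<open>i < n\<close>] by (simp add: util_def)
    then show ?thesis using False by (simp add: c_def seg_sum_def)
  qed
  moreover have "\<forall>j<n. c j \<le> c (Suc j)" "c n = c 0 + m" using assms(2) by (auto simp: c_def)
  ultimately show ?thesis using that by blast
next
  case False
  interpret arc_split m n P
    using assms(1) P False by (simp add: arc_split_def)
  show ?thesis using chain_of_arc_split[OF val] that by blast
qed

lemma periodic_cuts_of_chain:
  assumes "1 \<le> n" and mono: "\<forall>j<n. c j \<le> c (Suc j)" and round: "c n = c 0 + m"
    and val: "\<forall>j<n. a \<le> seg_sum w (c j) (c (Suc j))"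
    and "\<And>x. 0 \<le> w x" "\<And>x. w (x + m) = w x" "0 \<le> a"
  shows "periodic_cuts m n w a (\<lambda>i. c (i mod n) + i div n * m)"
proof
  fix i
  let ?p = "\<lambda>i. c (i mod n) + i div n * m"
  have p_Suc: "?p (Suc i) = c (Suc (i mod n)) + i div n * m"
  proof (cases "Suc (i mod n) = n")
    case True
    then have "Suc i mod n = 0" "Suc i div n = Suc (i div n)" by (simp_all add: mod_Suc div_Suc)
    then show ?thesis using True round by simp
  next
    case False
    then have "Suc i mod n = Suc (i mod n)" "Suc i div n = i div n" by (simp_all add: mod_Suc div_Suc)
    then show ?thesis by simp
  qed
  have "i mod n < n" using assms(1) by simp
  then show "?p i \<le> ?p (Suc i)" unfolding p_Suc using mono by simp
  show "a \<le> seg_sum w (?p i) (?p (Suc i))"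
    unfolding p_Suc using seg_sum_periodic[of w m] assms(6) val \<open>i mod n < n\<close> by simp
  show "?p (i + n) = ?p i + m" using assms(1) by simp
qed (use assms(5-7) in simp_all)

lemma mms_periodic_cuts:
  assumes "0 < m" "1 \<le> n" "\<And>g. g < m \<Longrightarrow> 0 \<le> u g"
  shows "\<exists>p. periodic_cuts m n (\<lambda>x. u (x mod m)) (mms m n u) p"
proof -
  obtain P where P: "is_split m n P" "(MIN i\<in>{0..<n}. util u (P i)) = mms m n u"
    using mms_attained[OF assms(1,2)] by blast
  have fin: "finite ((\<lambda>i. util u (P i)) ` {0..<n})" "(\<lambda>i. util u (P i)) ` {0..<n} \<noteq> {}"
    using assms(2) by auto
  have "0 \<le> util u (P i)" if "i < n" for i
    using split_subset[OF P(1) that] assms(3) unfolding util_def by (intro sum_nonneg) auto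
  then have "0 \<le> mms m n u" unfolding P(2)[symmetric] using fin by (simp add: Min_ge_iff)
  moreover have "mms m n u \<le> util u (P i)" if "i < n" for i
    unfolding P(2)[symmetric] using fin that by (auto intro: Min_le)
  then obtain c where c: "\<forall>j<n. c j \<le> c (Suc j)" "c n = c 0 + m"
      "\<forall>j<n. mms m n u \<le> seg_sum (\<lambda>x. u (x mod m)) (c j) (c (Suc j))"
    using chain_of_split[OF assms(1,2) P(1)] by blast
  have "0 \<le> u (x mod m)" for x using assms(1,3) by simp
  with c show ?thesis
    using periodic_cuts_of_chain[OF assms(2) c] \<open>0 \<le> mms m n u\<close> by auto
qed

lemma split_of_mixed_cuttable:
  assumes "0 < m" "k + l = n" "k = card {i. i < n \<and> ty i}"
    and "mixed_cuttable (\<lambda>x. u1 (x mod m)) (\<lambda>x. u2 (x mod m)) t1 t2 s (s + m) k l"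
  obtains P where "is_split m n P"
    "\<And>i. i < n \<Longrightarrow> ty i \<Longrightarrow> t1 \<le> util u1 (P i)"
    "\<And>i. i < n \<Longrightarrow> \<not> ty i \<Longrightarrow> t2 \<le> util u2 (P i)"
proof -
  obtain c \<tau> where c: "c 0 = s" "c n = s + m" "card {i. i < n \<and> \<tau> i} = k"
    "\<forall>i<n. c i \<le> c (Suc i) \<and> (if \<tau> i then t1 \<le> seg_sum (\<lambda>x. u1 (x mod m)) (c i) (c (Suc i))
       else t2 \<le> seg_sum (\<lambda>x. u2 (x mod m)) (c i) (c (Suc i)))"
    using assms(4) unfolding mixed_cuttable_def assms(2) by blast
  obtain \<sigma> where \<sigma>: "bij_betw \<sigma> {..<n} {..<n}" "\<And>i. i < n \<Longrightarrow> \<tau> (\<sigma> i) \<longleftrightarrow> ty i"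
    using exists_bij_matching_labels[of n ty \<tau>] c(3) assms(3) by metis
  define P where "P i = arc m (c (\<sigma> i)) (c (Suc (\<sigma> i)))" for i
  have mono: "\<forall>j<n. c j \<le> c (Suc j)" using c(4) by blast
  have round: "c n = c 0 + m" using c(1,2) by simp
  have \<sigma>_lt: "\<sigma> i < n" if "i < n" for i using \<sigma>(1) that unfolding bij_betw_def by auto
  have util_P: "util u (P i) = seg_sum (\<lambda>x. u (x mod m)) (c (\<sigma> i)) (c (Suc (\<sigma> i)))"
    if "i < n" for i u
  proof -
    have "c 0 \<le> c (\<sigma> i)" "c (Suc (\<sigma> i)) \<le> c n" using chain_mono[OF mono] \<sigma>_lt[OF that] by auto
    then show ?thesis unfolding P_def using util_arc round by simp
  qed
  show ?thesis
  proof (rule that)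
    show "is_split m n P" unfolding P_def using split_of_chain[OF assms(1) mono round \<sigma>(1)] .
    show "t1 \<le> util u1 (P i)" if "i < n" "ty i" for i
      using c(4) \<sigma>_lt[OF that(1)] \<sigma>(2)[OF that(1)] that(2) util_P[OF that(1)] by auto
    show "t2 \<le> util u2 (P i)" if "i < n" "\<not> ty i" for i
      using c(4) \<sigma>_lt[OF that(1)] \<sigma>(2)[OF that(1)] that(2) util_P[OF that(1)] by auto
  qed
qed

lemma three_quarter_sufficient:
  assumes "0 < m" "1 \<le> n" "\<And>g. g < m \<Longrightarrow> 0 \<le> u1 g" "\<And>g. g < m \<Longrightarrow> 0 \<le> u2 g"
    and types: "\<And>i g. i < n \<Longrightarrow> g < m \<Longrightarrow> U i g = (if ty i then u1 g else u2 g)"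
  shows "\<exists>P. sufficient (3/4) m n U P"
proof -
  obtain p q where
    p: "periodic_cuts m n (\<lambda>x. u1 (x mod m)) (mms m n u1) p" and
    q: "periodic_cuts m n (\<lambda>x. u2 (x mod m)) (mms m n u2) q"
    using mms_periodic_cuts[of m n u1, OF assms(1-3)] mms_periodic_cuts[of m n u2, OF assms(1,2,4)]
    by blast
  define k where "k = card {i. i < n \<and> ty i}"
  have "k \<le> n" unfolding k_def using card_mono[of "{..<n}" "{i. i < n \<and> ty i}"] by auto
  then have kl: "k + (n - k) = n" by simp
  obtain s where "mixed_cuttable (\<lambda>x. u1 (x mod m)) (\<lambda>x. u2 (x mod m))
      (3/4 * mms m n u1) (3/4 * mms m n u2) s (s + m) k (n - k)"
    using fair_cut[OF p q kl assms(1)] by blast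
  then obtain P where P: "is_split m n P"
    "\<And>i. i < n \<Longrightarrow> ty i \<Longrightarrow> 3/4 * mms m n u1 \<le> util u1 (P i)"
    "\<And>i. i < n \<Longrightarrow> \<not> ty i \<Longrightarrow> 3/4 * mms m n u2 \<le> util u2 (P i)"
    using split_of_mixed_cuttable[OF assms(1) kl k_def] by blast
  have "3/4 * mms m n (U i) \<le> util (U i) (P i)" if "i < n" for i
  proof (cases "ty i")
    case True
    then have "\<And>g. g < m \<Longrightarrow> U i g = u1 g" using types[OF that] by simp
    then show ?thesis
      using util_cong[OF split_subset[OF P(1) that]] mms_cong P(2)[OF that True] by metis
  next
    case False
    then have "\<And>g. g < m \<Longrightarrow> U i g = u2 g" using types[OF that] by simp
    then show ?thesis
      using util_cong[OF split_subset[OF P(1) that]] mms_cong P(3)[OF that False] by metis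
  qed
  then show ?thesis using P(1) unfolding sufficient_def by blast
qed

theorem theorem4p8:
  fixes m n :: nat and U :: "nat \<Rightarrow> nat \<Rightarrow> real"
  assumes "m \<ge> 3" and "n \<ge> 1"
    and nonneg: "\<forall>i<n. \<forall>g<m. U i g \<ge> 0"
    and two_types: "\<exists>u1 u2. \<forall>i<n. (\<forall>g<m. U i g = u1 g) \<or> (\<forall>g<m. U i g = u2 g)"
  shows "\<exists>P. sufficient (3/4) m n U P"
proof -
  obtain u1 u2 where types: "\<forall>i<n. (\<forall>g<m. U i g = u1 g) \<or> (\<forall>g<m. U i g = u2 g)"
    using two_types by blast
  define ty where "ty i \<longleftrightarrow> (\<forall>g<m. U i g = u1 g)" for i
  \<comment> \<open>Clipping at 0 only changes a type's utility if no agent has that type.\<close>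
  have "U i g = (if ty i then max 0 (u1 g) else max 0 (u2 g))" if "i < n" "g < m" for i g
    using types nonneg that unfolding ty_def by (metis max.absorb2)
  then show ?thesis
    using three_quarter_sufficient[of m n "\<lambda>g. max 0 (u1 g)" "\<lambda>g. max 0 (u2 g)" U ty] assms(1,2)
    by simp
qed

end
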